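(* Let $n,m\in\mathbb{N}$ and $f,g:\mathbb{F}_2^n\to\mathbb{F}_2$. Then for every $\mathbf{z}\in\mathbb{F}_2^n$, $$C^{(m)}_{f,g}(\mathbf{z})=\zeta_m^{wt(\mathbf{z})}\sum_{\mathbf{u}\in\mathbb{F}_2^n}\mathcal{H}^{(m)}_f(\mathbf{u})\,\overline{\mathcal{H}^{(m)}_g(\mathbf{u})}\,(-1)^{\mathbf{u}\cdot\mathbf{z}}.$$
   Context: $\zeta_m=e^{2\pi i/m}$; $wt$ is Hamming weight; $\mathbf{x}\cdot\mathbf{y}=\bigoplus_i x_iy_i\in\mathbb{F}_2$; $\mathbf{x}\odot\mathbf{y}=\sum_i x_iy_i$ computed in the integers. The $m$-Hadamard transform is $\mathcal{H}^{(m)}_f(\boldsymbol{\omega})=2^{-n/2}\sum_{\mathbf{x}\in\mathbb{F}_2^n}(-1)^{f(\mathbf{x})\oplus\mathbf{x}\cdot\boldsymbol{\omega}}\zeta_m^{wt(\mathbf{x})}$, and the $m$-crosscorrelation is $C^{(m)}_{f,g}(\mathbf{y})=\sum_{\mathbf{x}\in\mathbb{F}_2^n}(-1)^{f(\mathbf{x})\oplus g(\mathbf{x}\oplus\mathbf{y})}(\zeta_m^2)^{\mathbf{x}\odot\mathbf{y}}$. *)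

theory Defs
  imports "HOL-Analysis.Analysis"
begin

text \<open>Vectors of F_2^n are boolean lists of length n (True = 1).\<close>

definition vecs :: "nat \<Rightarrow> bool list set" where
  "vecs n = {xs. length xs = n}"

definition zeta :: "nat \<Rightarrow> complex" where
  "zeta m = cis (2 * pi / real m)"

definition wt :: "bool list \<Rightarrow> nat" where
  "wt x = length (filter id x)"

definition dotF2 :: "bool list \<Rightarrow> bool list \<Rightarrow> bool" where
  "dotF2 x y = odd (length (filter id (map2 (\<and>) x y)))"

definition dotZ :: "bool list \<Rightarrow> bool list \<Rightarrow> nat" where
  "dotZ x y = length (filter id (map2 (\<and>) x y))"

definition xorv :: "bool list \<Rightarrow> bool list \<Rightarrow> bool list" where
  "xorv x y = map2 (\<noteq>) x y"

definition sgn1 :: "bool \<Rightarrow> complex" where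
  "sgn1 b = (if b then -1 else 1)"

definition mHadamard :: "nat \<Rightarrow> nat \<Rightarrow> (bool list \<Rightarrow> bool) \<Rightarrow> bool list \<Rightarrow> complex" where
  "mHadamard n m f w = (1 / sqrt (2 ^ n)) *
     (\<Sum>x\<in>vecs n. sgn1 (f x \<noteq> dotF2 x w) * zeta m ^ wt x)"

definition mCrosscorr :: "nat \<Rightarrow> nat \<Rightarrow> (bool list \<Rightarrow> bool) \<Rightarrow> (bool list \<Rightarrow> bool) \<Rightarrow> bool list \<Rightarrow> complex" where
  "mCrosscorr n m f g y =
     (\<Sum>x\<in>vecs n. sgn1 (f x \<noteq> g (xorv x y)) * (zeta m ^ 2) ^ dotZ x y)"

end

theory Submission
  imports Defs
begin

(* Expanding both m-Hadamard transforms turns the right-hand side into a sum over x, y, u of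
   (-1)^(f x + g y) zeta^(wt x) conj(zeta)^(wt y) (-1)^(u.(x + y + z)). Orthogonality of the
   characters u |-> (-1)^(u.w) keeps only the terms y = x + z: this is the correlation identity
   for the unnormalised Walsh transform. The surviving weights combine into the crosscorrelation
   weight because wt x + wt z = wt (x + z) + 2 (x (.) z) and |zeta| = 1. *)

lemma sgn1_neq: "sgn1 (a \<noteq> b) = sgn1 a * sgn1 b"
  and sgn1_eq_Not: "sgn1 (a = (\<not> b)) = sgn1 a * sgn1 b"
  by (simp_all add: sgn1_def)

lemma cnj_sgn1 [simp]: "cnj (sgn1 b) = sgn1 b"
  by (simp add: sgn1_def)

lemma dotF2_Nil [simp]: "dotF2 [] [] = False"
  by (simp add: dotF2_def)

lemma dotZ_Nil [simp]: "dotZ [] [] = 0"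
  by (simp add: dotZ_def)

lemma wt_Nil [simp]: "wt [] = 0"
  by (simp add: wt_def)

lemma xorv_Nil [simp]: "xorv [] [] = []"
  by (simp add: xorv_def)

lemma dotF2_Cons [simp]: "dotF2 (a # x) (b # y) = ((a \<and> b) \<noteq> dotF2 x y)"
  by (cases a; cases b) (simp_all add: dotF2_def)

lemma dotZ_Cons [simp]: "dotZ (a # x) (b # y) = (if a \<and> b then 1 else 0) + dotZ x y"
  by (simp add: dotZ_def)

lemma wt_Cons [simp]: "wt (a # x) = (if a then 1 else 0) + wt x"
  by (simp add: wt_def)

lemma xorv_Cons [simp]: "xorv (a # x) (b # y) = (a \<noteq> b) # xorv x y"
  by (simp add: xorv_def)

lemma length_xorv [simp]: "length (xorv x y) = min (length x) (length y)"
  by (simp add: xorv_def)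

lemma dotF2_commute: "length x = length y \<Longrightarrow> dotF2 x y = dotF2 y x"
  by (induction x y rule: list_induct2) auto

lemma dotF2_xorv_left:
  "length x = length y \<Longrightarrow> length y = length u \<Longrightarrow>
    dotF2 (xorv x y) u = (dotF2 x u \<noteq> dotF2 y u)"
  by (induction x y u rule: list_induct3) auto

lemma wt_add_wt_eq: "length x = length z \<Longrightarrow> wt x + wt z = wt (xorv x z) + 2 * dotZ x z"
  by (induction x z rule: list_induct2) auto

lemma xorv_xorv_eq_zero_iff:
  "length x = n \<Longrightarrow> length y = n \<Longrightarrow> length z = n \<Longrightarrow>
    (xorv (xorv x y) z = replicate n False) = (y = xorv x z)"
  by (induction n arbitrary: x y z) (auto simp: length_Suc_conv)

lemma xorv_in_vecs: "x \<in> vecs n \<Longrightarrow> y \<in> vecs n \<Longrightarrow> xorv x y \<in> vecs n"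
  by (simp add: vecs_def)

lemma vecs_0: "vecs 0 = {[]}"
  by (auto simp: vecs_def)

lemma vecs_Suc: "vecs (Suc n) = (\<lambda>(a, u). a # u) ` (UNIV \<times> vecs n)"
  by (auto simp: vecs_def image_iff length_Suc_conv)

lemma finite_vecs [simp]: "finite (vecs n)"
  by (induction n) (auto simp: vecs_0 vecs_Suc)

lemma sum_vecs_Suc: "(\<Sum>v\<in>vecs (Suc n). h v) = (\<Sum>a\<in>UNIV. \<Sum>u\<in>vecs n. h (a # u))"
proof -
  have "(\<Sum>v\<in>vecs (Suc n). h v) = (\<Sum>(a, u)\<in>UNIV \<times> vecs n. h (a # u))"
    unfolding vecs_Suc by (subst sum.reindex) (auto simp: inj_on_def intro!: sum.cong)
  then show ?thesis
    by (simp add: sum.cartesian_product)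
qed

lemma sum_sgn1_dotF2:
  "length w = n \<Longrightarrow>
    (\<Sum>u\<in>vecs n. sgn1 (dotF2 u w)) = (if w = replicate n False then 2 ^ n else 0)"
proof (induction n arbitrary: w)
  case 0
  then show ?case by (simp add: vecs_0 sgn1_def)
next
  case (Suc n)
  then obtain c w' where w: "w = c # w'" "length w' = n"
    by (metis length_Suc_conv)
  have "(\<Sum>u\<in>vecs (Suc n). sgn1 (dotF2 u w)) =
      (\<Sum>a\<in>UNIV. sgn1 (a \<and> c)) * (\<Sum>u\<in>vecs n. sgn1 (dotF2 u w'))"
    by (simp add: sum_vecs_Suc w sgn1_eq_Not sum_product)
  then show ?case
    using Suc.IH[OF w(2)] by (simp add: w UNIV_bool sgn1_def)
qed

definition walsh :: "nat \<Rightarrow> (bool list \<Rightarrow> complex) \<Rightarrow> bool list \<Rightarrow> complex" where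
  "walsh n F u = (\<Sum>x\<in>vecs n. F x * sgn1 (dotF2 x u))"

lemma walsh_correlation:
  assumes "z \<in> vecs n"
  shows "(\<Sum>u\<in>vecs n. walsh n F u * cnj (walsh n G u) * sgn1 (dotF2 u z)) =
    2 ^ n * (\<Sum>x\<in>vecs n. F x * cnj (G (xorv x z)))"
proof -
  have len_z: "length z = n"
    using assms by (simp add: vecs_def)
  have character: "sgn1 (dotF2 x u) * sgn1 (dotF2 y u) * sgn1 (dotF2 u z) =
      sgn1 (dotF2 u (xorv (xorv x y) z))"
    if "x \<in> vecs n" "y \<in> vecs n" "u \<in> vecs n" for x y u
    using that len_z
    by (simp add: vecs_def dotF2_commute[of u] dotF2_xorv_left sgn1_eq_Not)
  have "(\<Sum>u\<in>vecs n. walsh n F u * cnj (walsh n G u) * sgn1 (dotF2 u z)) =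
      (\<Sum>u\<in>vecs n. \<Sum>x\<in>vecs n. \<Sum>y\<in>vecs n.
        F x * cnj (G y) * (sgn1 (dotF2 x u) * sgn1 (dotF2 y u) * sgn1 (dotF2 u z)))"
    unfolding walsh_def cnj_sum sum_product sum_distrib_right
    by (simp add: sum_distrib_left mult_ac)
  also have "\<dots> = (\<Sum>u\<in>vecs n. \<Sum>x\<in>vecs n. \<Sum>y\<in>vecs n.
      F x * cnj (G y) * sgn1 (dotF2 u (xorv (xorv x y) z)))"
    by (intro sum.cong refl) (simp add: character)
  also have "\<dots> = (\<Sum>x\<in>vecs n. \<Sum>y\<in>vecs n.
      F x * cnj (G y) * (\<Sum>u\<in>vecs n. sgn1 (dotF2 u (xorv (xorv x y) z))))"
    unfolding sum_distrib_left by (subst sum.swap) (rule sum.cong[OF refl], rule sum.swap)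
  also have "\<dots> = (\<Sum>x\<in>vecs n. \<Sum>y\<in>vecs n. if y = xorv x z then 2 ^ n * (F x * cnj (G y)) else 0)"
  proof (intro sum.cong refl)
    fix x y
    assume "x \<in> vecs n" "y \<in> vecs n"
    then have "length x = n" "length y = n"
      by (simp_all add: vecs_def)
    then show "F x * cnj (G y) * (\<Sum>u\<in>vecs n. sgn1 (dotF2 u (xorv (xorv x y) z))) =
        (if y = xorv x z then 2 ^ n * (F x * cnj (G y)) else 0)"
      using len_z by (simp add: sum_sgn1_dotF2 xorv_xorv_eq_zero_iff)
  qed
  also have "\<dots> = 2 ^ n * (\<Sum>x\<in>vecs n. F x * cnj (G (xorv x z)))"
    using assms by (simp add: sum.delta sum_distrib_left xorv_in_vecs cong: sum.cong)
  finally show ?thesis .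
qed

lemma norm_zeta [simp]: "cmod (zeta m) = 1"
  by (simp add: zeta_def)

lemma unit_power_wt_xorv:
  fixes \<zeta> :: complex
  assumes "cmod \<zeta> = 1" and "length x = length z"
  shows "\<zeta> ^ wt z * (\<zeta> ^ wt x * cnj \<zeta> ^ wt (xorv x z)) = (\<zeta> ^ 2) ^ dotZ x z"
proof -
  have "\<zeta> \<noteq> 0" and cnj_eq: "cnj \<zeta> = inverse \<zeta>"
    using assms(1) by (auto simp: divide_conv_cnj inverse_eq_divide)
  have "\<zeta> ^ wt z * (\<zeta> ^ wt x * cnj \<zeta> ^ wt (xorv x z)) =
      \<zeta> ^ wt x * \<zeta> ^ wt z * inverse (\<zeta> ^ wt (xorv x z))"
    by (simp add: cnj_eq power_inverse mult_ac)
  also have "\<zeta> ^ wt x * \<zeta> ^ wt z = \<zeta> ^ wt (xorv x z) * (\<zeta> ^ 2) ^ dotZ x z"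
    using wt_add_wt_eq[OF assms(2)] by (metis power_add power_mult)
  finally show ?thesis
    using \<open>\<zeta> \<noteq> 0\<close> by simp
qed

definition weighted_sign :: "nat \<Rightarrow> (bool list \<Rightarrow> bool) \<Rightarrow> bool list \<Rightarrow> complex" where
  "weighted_sign m f x = sgn1 (f x) * zeta m ^ wt x"

lemma mHadamard_eq_walsh:
  "mHadamard n m f u = of_real (1 / sqrt (2 ^ n)) * walsh n (weighted_sign m f) u"
  by (simp add: mHadamard_def walsh_def weighted_sign_def sgn1_eq_Not mult_ac)

lemma mCrosscorr_eq_correlation:
  assumes "z \<in> vecs n"
  shows "mCrosscorr n m f g z =
    zeta m ^ wt z * (\<Sum>x\<in>vecs n. weighted_sign m f x * cnj (weighted_sign m g (xorv x z)))"
  unfolding mCrosscorr_def sum_distrib_left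
proof (intro sum.cong refl)
  fix x
  assume "x \<in> vecs n"
  then have "length x = length z"
    using assms by (simp add: vecs_def)
  have "zeta m ^ wt z * (weighted_sign m f x * cnj (weighted_sign m g (xorv x z))) =
      sgn1 (f x) * sgn1 (g (xorv x z)) *
        (zeta m ^ wt z * (zeta m ^ wt x * cnj (zeta m) ^ wt (xorv x z)))"
    by (simp add: weighted_sign_def mult_ac)
  also have "\<dots> = sgn1 (f x \<noteq> g (xorv x z)) * (zeta m ^ 2) ^ dotZ x z"
    by (simp only: unit_power_wt_xorv[OF norm_zeta \<open>length x = length z\<close>] sgn1_neq)
  finally show "sgn1 (f x \<noteq> g (xorv x z)) * (zeta m ^ 2) ^ dotZ x z =
      zeta m ^ wt z * (weighted_sign m f x * cnj (weighted_sign m g (xorv x z)))" ..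
qed

theorem theorem5:
  fixes n m :: nat and f g :: "bool list \<Rightarrow> bool" and z :: "bool list"
  assumes "z \<in> vecs n"
  shows "mCrosscorr n m f g z =
    zeta m ^ wt z * (\<Sum>u\<in>vecs n. mHadamard n m f u * cnj (mHadamard n m g u) * sgn1 (dotF2 u z))"
proof -
  define c :: complex where "c = of_real (1 / sqrt (2 ^ n))"
  have normalization: "c * c * 2 ^ n = 1"
    by (simp add: c_def flip: of_real_mult of_real_power) (metis of_real_numeral of_real_power)
  have "(\<Sum>u\<in>vecs n. mHadamard n m f u * cnj (mHadamard n m g u) * sgn1 (dotF2 u z)) =
      c * c * (\<Sum>u\<in>vecs n. walsh n (weighted_sign m f) u * cnj (walsh n (weighted_sign m g) u) *
        sgn1 (dotF2 u z))"
    by (simp add: mHadamard_eq_walsh c_def sum_distrib_left mult_ac)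
  also have "\<dots> = (\<Sum>x\<in>vecs n. weighted_sign m f x * cnj (weighted_sign m g (xorv x z)))"
    by (simp only: walsh_correlation[OF assms] mult.assoc[symmetric] normalization mult_1_left)
  finally show ?thesis
    by (simp add: mCrosscorr_eq_correlation[OF assms])
qed

end
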